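(* Let $P$ be a convex polyhedron and let $O$ be its topological interior in its affine hull $\mathrm{Aff}\,P$. Then $\mathrm{Logic}(P)=\mathrm{Logic}(O)$.
   Context: A polyhedron is a finite union of convex hulls of finite subsets of some $\mathbb R^d$; it is convex if it is a convex set. An open subpolyhedron of $P$ is $P\setminus R$ with $R\subseteq P$ a polyhedron; $\mathrm{Sub}_o P$ denotes the Heyting algebra of open subpolyhedra of $P$, and $\mathrm{Logic}(P)$ is the set of intuitionistic formulas valid on $\mathrm{Sub}_o P$. The set $O$ is an open subpolyhedron of $P$, and $\mathrm{Logic}(O)$ denotes the set of formulas valid on the Heyting algebra $\mathrm{Sub}_o O:=\{U\cap O: U\in\mathrm{Sub}_o P\}$. *)

theory Defs
  imports "HOL-Analysis.Analysis"
begin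

text \<open>Polyhedra in the sense of the paper: finite unions of convex hulls of finite sets.
  (Named pl_polyhedron to avoid a clash with the library's halfspace notion.)\<close>
definition pl_polyhedron :: "'a::euclidean_space set \<Rightarrow> bool" where
  "pl_polyhedron S \<longleftrightarrow>
     (\<exists>\<F>. finite \<F> \<and> (\<forall>A\<in>\<F>. finite A) \<and> S = \<Union> ((\<lambda>A. convex hull A) ` \<F>))"

definition Sub_o :: "'a::euclidean_space set \<Rightarrow> 'a set set" where
  "Sub_o P = {P - R | R. R \<subseteq> P \<and> pl_polyhedron R}"

definition Sub_o_rel :: "'a::euclidean_space set \<Rightarrow> 'a set \<Rightarrow> 'a set set" where
  "Sub_o_rel P Q = {U \<inter> Q | U. U \<in> Sub_o P}"

datatype ipc_form =
    PVar nat
  | FBot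
  | FTop
  | FConj ipc_form ipc_form
  | FDisj ipc_form ipc_form
  | FImp ipc_form ipc_form

text \<open>Interpretation in a lattice of sets L with top element X, ordered by inclusion,
  meet = intersection, join = union, bottom = empty set; the Heyting implication
  U \<rightarrow> V is the greatest element W of L with W \<inter> U \<subseteq> V, i.e. the union of all such W.\<close>
fun heval :: "'a set set \<Rightarrow> 'a set \<Rightarrow> (nat \<Rightarrow> 'a set) \<Rightarrow> ipc_form \<Rightarrow> 'a set" where
  "heval L X v (PVar n) = v n"
| "heval L X v FBot = {}"
| "heval L X v FTop = X"
| "heval L X v (FConj a b) = heval L X v a \<inter> heval L X v b"
| "heval L X v (FDisj a b) = heval L X v a \<union> heval L X v b"
| "heval L X v (FImp a b) = \<Union> {W \<in> L. W \<inter> heval L X v a \<subseteq> heval L X v b}"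

definition Logic_of :: "'a set set \<Rightarrow> 'a set \<Rightarrow> ipc_form set" where
  "Logic_of L X = {\<phi>. \<forall>v. (\<forall>n. v n \<in> L) \<longrightarrow> heval L X v \<phi> = X}"

end

theory Submission
  imports Defs
begin

text \<open>Write O for the relative interior of P. Restriction U \<mapsto> U \<inter> O is a surjective Heyting
  homomorphism from the open subpolyhedra of P onto those of O, because O is itself an open
  subpolyhedron of P; hence Logic(P) \<subseteq> Logic(O). Conversely, choose c \<in> O and let rho stretch
  the inner half of O radially onto P and fold the outer collar back onto the boundary layer. Then
  rho : O \<rightarrow> P is a piecewise linear, open surjection, so pulling back along rho embeds the algebra
  of P into that of O, and Logic(O) \<subseteq> Logic(P).\<close>

lemma heval_subset:
  assumes "\<forall>W\<in>L. W \<subseteq> X" and "\<forall>n. v n \<in> L"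
  shows "heval L X v \<phi> \<subseteq> X"
  using assms by (induction \<phi>) auto

lemma heval_restrict:
  assumes Q: "Q \<in> L" "Q \<subseteq> X" and Int: "\<forall>U\<in>L. \<forall>V\<in>L. U \<inter> V \<in> L"
  shows "heval {W \<inter> Q | W. W \<in> L} Q (\<lambda>n. v n \<inter> Q) \<phi> = heval L X v \<phi> \<inter> Q"
proof (induction \<phi>)
  case (FImp \<phi> \<psi>)
  let ?L' = "{W \<inter> Q | W. W \<in> L}"
  let ?A = "heval L X v \<phi>" and ?B = "heval L X v \<psi>"
  show ?case
  proof (rule set_eqI, rule iffI)
    fix y assume "y \<in> heval ?L' Q (\<lambda>n. v n \<inter> Q) (FImp \<phi> \<psi>)"
    then obtain W where W: "W \<in> L" "y \<in> W \<inter> Q" "W \<inter> Q \<inter> (?A \<inter> Q) \<subseteq> ?B \<inter> Q"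
      using FImp by auto
    have "W \<inter> Q \<in> L" using Int W Q by blast
    moreover have "W \<inter> Q \<inter> ?A \<subseteq> ?B" using W by blast
    ultimately show "y \<in> heval L X v (FImp \<phi> \<psi>) \<inter> Q" using W by auto
  next
    fix y assume "y \<in> heval L X v (FImp \<phi> \<psi>) \<inter> Q"
    then obtain V where V: "V \<in> L" "y \<in> V" "V \<inter> ?A \<subseteq> ?B" "y \<in> Q" by auto
    have "V \<inter> Q \<in> ?L'" using V by blast
    moreover have "V \<inter> Q \<inter> (?A \<inter> Q) \<subseteq> ?B \<inter> Q" using V by blast
    ultimately have "y \<in> \<Union>{W \<in> ?L'. W \<inter> (?A \<inter> Q) \<subseteq> ?B \<inter> Q}" using V by blast
    then show "y \<in> heval ?L' Q (\<lambda>n. v n \<inter> Q) (FImp \<phi> \<psi>)" using FImp by (simp only: heval.simps)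
  qed
qed (use Q in \<open>simp_all, blast+\<close>)

lemma Logic_of_subset_restrict:
  assumes Q: "Q \<in> L" "Q \<subseteq> X" and Int: "\<forall>U\<in>L. \<forall>V\<in>L. U \<inter> V \<in> L"
  shows "Logic_of L X \<subseteq> Logic_of {W \<inter> Q | W. W \<in> L} Q"
proof
  fix \<phi> assume \<phi>: "\<phi> \<in> Logic_of L X"
  show "\<phi> \<in> Logic_of {W \<inter> Q | W. W \<in> L} Q"
    unfolding Logic_of_def
  proof (intro CollectI allI impI)
    fix v :: "nat \<Rightarrow> _" assume "\<forall>n. v n \<in> {W \<inter> Q | W. W \<in> L}"
    then have "\<forall>n. \<exists>W. W \<in> L \<and> v n = W \<inter> Q" by blast
    then obtain u where u: "\<And>n. u n \<in> L" and "\<And>n. v n = u n \<inter> Q"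
      by (metis choice)
    then have v: "v = (\<lambda>n. u n \<inter> Q)" by blast
    have "heval {W \<inter> Q | W. W \<in> L} Q v \<phi> = heval L X u \<phi> \<inter> Q"
      unfolding v by (rule heval_restrict[OF Q Int])
    also have "heval L X u \<phi> = X" using \<phi> u unfolding Logic_of_def by auto
    finally show "heval {W \<inter> Q | W. W \<in> L} Q v \<phi> = Q" using Q by auto
  qed
qed

lemma heval_preimage:
  assumes L'_sub: "\<forall>W\<in>L'. W \<subseteq> Q"
    and preimage: "\<forall>V\<in>L. {y\<in>Q. f y \<in> V} \<in> L'"
    and open_map: "\<forall>W\<in>L'. \<forall>y\<in>W. \<exists>V\<in>L. f y \<in> V \<and> V \<subseteq> f ` W"
    and maps_to: "f ` Q \<subseteq> X"
  shows "heval L' Q (\<lambda>n. {y\<in>Q. f y \<in> v n}) \<phi> = {y\<in>Q. f y \<in> heval L X v \<phi>}"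
proof (induction \<phi>)
  case (FImp \<phi> \<psi>)
  let ?A = "heval L X v \<phi>" and ?B = "heval L X v \<psi>"
  show ?case
  proof (rule set_eqI, rule iffI)
    fix y assume "y \<in> heval L' Q (\<lambda>n. {y\<in>Q. f y \<in> v n}) (FImp \<phi> \<psi>)"
    then obtain W where W: "W \<in> L'" "y \<in> W" "W \<inter> {y\<in>Q. f y \<in> ?A} \<subseteq> {y\<in>Q. f y \<in> ?B}"
      using FImp by auto
    obtain V where V: "V \<in> L" "f y \<in> V" "V \<subseteq> f ` W" using open_map W by blast
    have "W \<subseteq> Q" using L'_sub W by blast
    then have "V \<inter> ?A \<subseteq> ?B" using V(3) W(3) by blast
    then show "y \<in> {y\<in>Q. f y \<in> heval L X v (FImp \<phi> \<psi>)}" using V W \<open>W \<subseteq> Q\<close> by auto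
  next
    fix y assume "y \<in> {y\<in>Q. f y \<in> heval L X v (FImp \<phi> \<psi>)}"
    then obtain V where V: "V \<in> L" "f y \<in> V" "V \<inter> ?A \<subseteq> ?B" "y \<in> Q" by auto
    have "{y\<in>Q. f y \<in> V} \<in> L'" using preimage V by blast
    moreover have "{y\<in>Q. f y \<in> V} \<inter> {y\<in>Q. f y \<in> ?A} \<subseteq> {y\<in>Q. f y \<in> ?B}" using V by blast
    ultimately have "y \<in> \<Union>{W \<in> L'. W \<inter> {y\<in>Q. f y \<in> ?A} \<subseteq> {y\<in>Q. f y \<in> ?B}}"
      using V by blast
    then show "y \<in> heval L' Q (\<lambda>n. {y\<in>Q. f y \<in> v n}) (FImp \<phi> \<psi>)" using FImp by (simp only: heval.simps)
  qed
qed (use maps_to in \<open>simp_all, blast+\<close>)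

text \<open>Pulling back along f embeds L into L'; openness of f is what makes the embedding preserve
  Heyting implication.\<close>
lemma Logic_of_subset_preimage:
  assumes L'_sub: "\<forall>W\<in>L'. W \<subseteq> Q" and L_sub: "\<forall>V\<in>L. V \<subseteq> X"
    and preimage: "\<forall>V\<in>L. {y\<in>Q. f y \<in> V} \<in> L'"
    and open_map: "\<forall>W\<in>L'. \<forall>y\<in>W. \<exists>V\<in>L. f y \<in> V \<and> V \<subseteq> f ` W"
    and onto: "f ` Q = X"
  shows "Logic_of L' Q \<subseteq> Logic_of L X"
proof
  fix \<phi> assume \<phi>: "\<phi> \<in> Logic_of L' Q"
  show "\<phi> \<in> Logic_of L X"
    unfolding Logic_of_def
  proof (intro CollectI allI impI)
    fix v :: "nat \<Rightarrow> _" assume v: "\<forall>n. v n \<in> L"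
    have valid: "\<forall>w. (\<forall>n. w n \<in> L') \<longrightarrow> heval L' Q w \<phi> = Q"
      using \<phi> unfolding Logic_of_def by blast
    have "heval L' Q (\<lambda>n. {y\<in>Q. f y \<in> v n}) \<phi> = Q"
      by (rule valid[rule_format]) (use v preimage in blast)
    moreover have "heval L' Q (\<lambda>n. {y\<in>Q. f y \<in> v n}) \<phi> = {y\<in>Q. f y \<in> heval L X v \<phi>}"
      by (rule heval_preimage[OF L'_sub preimage open_map]) (use onto in blast)
    ultimately have "X \<subseteq> heval L X v \<phi>" using onto by blast
    moreover have "heval L X v \<phi> \<subseteq> X" using heval_subset L_sub v by blast
    ultimately show "heval L X v \<phi> = X" by blast
  qed
qed

lemma pl_polyhedron_iff_union_of_polytope:
  "pl_polyhedron S \<longleftrightarrow> (finite union_of polytope) S"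
proof
  assume "pl_polyhedron S"
  then obtain \<F> where "finite \<F>" "\<forall>A\<in>\<F>. finite A" "S = \<Union> ((\<lambda>A. convex hull A) ` \<F>)"
    unfolding pl_polyhedron_def by blast
  then show "(finite union_of polytope) S"
    unfolding union_of_def polytope_def by (intro exI[of _ "(\<lambda>A. convex hull A) ` \<F>"]) auto
next
  assume "(finite union_of polytope) S"
  then obtain \<U> where \<U>: "finite \<U>" "\<forall>T\<in>\<U>. \<exists>A. finite A \<and> T = convex hull A" "S = \<Union>\<U>"
    unfolding union_of_def polytope_def by auto
  then obtain vert where "\<forall>T\<in>\<U>. finite (vert T) \<and> T = convex hull (vert T)"
    by metis
  with \<U> show "pl_polyhedron S"
    unfolding pl_polyhedron_def by (intro exI[of _ "vert ` \<U>"]) auto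
qed

lemma pl_polyhedron_Un:
  "pl_polyhedron R \<Longrightarrow> pl_polyhedron S \<Longrightarrow> pl_polyhedron (R \<union> S)"
  by (simp add: pl_polyhedron_iff_union_of_polytope finite_union_of_Un)

lemma pl_polyhedron_imp_compact: "pl_polyhedron S \<Longrightarrow> compact S"
  unfolding pl_polyhedron_iff_union_of_polytope union_of_def
  by (auto intro: compact_Union polytope_imp_compact)

lemma pl_polyhedron_convex_imp_polytope:
  assumes "pl_polyhedron P" and "convex P"
  shows "polytope P"
proof -
  obtain \<F> where \<F>: "finite \<F>" "\<forall>A\<in>\<F>. finite A" and P: "P = \<Union> ((\<lambda>A. convex hull A) ` \<F>)"
    using assms(1) unfolding pl_polyhedron_def by blast
  have "\<Union>\<F> \<subseteq> P" unfolding P using hull_subset by fastforce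
  then have "convex hull (\<Union>\<F>) \<subseteq> P" using assms(2) by (rule hull_minimal)
  moreover have "P \<subseteq> convex hull (\<Union>\<F>)" unfolding P by (auto intro: hull_mono[THEN subsetD])
  moreover have "finite (\<Union>\<F>)" using \<F> by blast
  ultimately show ?thesis unfolding polytope_def by blast
qed

lemma finite_union_of_polyhedron_Int:
  assumes "(finite union_of polyhedron) S" and "(finite union_of polyhedron) T"
  shows "(finite union_of polyhedron) (S \<inter> T)"
proof -
  have "\<forall>S T. polyhedron S \<and> polyhedron T \<longrightarrow> (finite union_of polyhedron) (S \<inter> T)"
    by (simp add: finite_union_of_inc)
  then show ?thesis
    using finite_union_of_Int_eq[of polyhedron] assms by blast
qed

lemma finite_union_of_polyhedron_INT:
  "finite I \<Longrightarrow> (\<And>i. i \<in> I \<Longrightarrow> (finite union_of polyhedron) (S i))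
    \<Longrightarrow> (finite union_of polyhedron) (\<Inter>i\<in>I. S i)"
  by (induction I rule: finite_induct)
    (auto intro: finite_union_of_polyhedron_Int finite_union_of_inc)

lemma finite_union_of_polyhedron_UN:
  "finite I \<Longrightarrow> (\<And>i. i \<in> I \<Longrightarrow> (finite union_of polyhedron) (S i))
    \<Longrightarrow> (finite union_of polyhedron) (\<Union>i\<in>I. S i)"
  by (rule finite_union_of_Union) auto

lemma pl_polyhedron_polytope_Int:
  assumes "polytope P" and "(finite union_of polyhedron) S"
  shows "pl_polyhedron (P \<inter> S)"
proof -
  obtain \<U> where \<U>: "finite \<U>" "\<forall>T\<in>\<U>. polyhedron T" "S = \<Union>\<U>"
    using assms(2) unfolding union_of_def by auto
  have "polytope (P \<inter> T)" if "T \<in> \<U>" for T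
    using polytope_Int_polyhedron assms(1) \<U>(2) that by blast
  then have "(finite union_of polytope) (\<Union>T\<in>\<U>. P \<inter> T)"
    using \<U>(1) by (intro finite_union_of_Union) (auto intro: finite_union_of_inc)
  moreover have "P \<inter> S = (\<Union>T\<in>\<U>. P \<inter> T)" using \<U>(3) by blast
  ultimately show ?thesis by (simp add: pl_polyhedron_iff_union_of_polytope)
qed

lemma Sub_o_subset: "U \<in> Sub_o P \<Longrightarrow> U \<subseteq> P"
  unfolding Sub_o_def by blast

lemma Sub_o_rel_self: "Sub_o_rel P P = Sub_o P"
proof -
  have "U \<inter> P = U" if "U \<in> Sub_o P" for U
    using Sub_o_subset[OF that] by blast
  then have "{U \<inter> P | U. U \<in> Sub_o P} = {U | U. U \<in> Sub_o P}"
    by (metis (no_types, lifting))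
  then show ?thesis
    unfolding Sub_o_rel_def by simp
qed

lemma Sub_o_Int:
  assumes "U \<in> Sub_o P" and "V \<in> Sub_o P"
  shows "U \<inter> V \<in> Sub_o P"
proof -
  obtain R S where "U = P - R" "R \<subseteq> P" "pl_polyhedron R" "V = P - S" "S \<subseteq> P" "pl_polyhedron S"
    using assms unfolding Sub_o_def by blast
  then show ?thesis
    unfolding Sub_o_def by (intro CollectI exI[of _ "R \<union> S"]) (auto intro: pl_polyhedron_Un)
qed

lemma polytope_Diff_in_Sub_o:
  assumes "polytope P" and "(finite union_of polyhedron) S"
  shows "P - S \<in> Sub_o P"
  unfolding Sub_o_def using pl_polyhedron_polytope_Int[OF assms]
  by (intro CollectI exI[of _ "P \<inter> S"]) auto

lemma Sub_o_nhds:
  fixes P :: "'a::euclidean_space set"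
  assumes P: "polytope P" and w: "w \<in> P" and e: "e > 0"
  shows "\<exists>V\<in>Sub_o P. w \<in> V \<and> V \<subseteq> ball w e"
proof -
  define \<delta> where "\<delta> = e / real DIM('a)"
  have \<delta>: "\<delta> > 0" using e by (simp add: \<delta>_def)
  define S where "S = (\<Union>i\<in>Basis. {x. i \<bullet> x \<le> i \<bullet> w - \<delta>} \<union> {x. i \<bullet> x \<ge> i \<bullet> w + \<delta>})"
  have "(finite union_of polyhedron) S" unfolding S_def
    by (intro finite_union_of_polyhedron_UN finite_Basis finite_union_of_Un finite_union_of_inc
        polyhedron_halfspace_le polyhedron_halfspace_ge)
  then have V: "P - S \<in> Sub_o P" by (rule polytope_Diff_in_Sub_o[OF P])
  have "w \<notin> S" using \<delta> by (auto simp: S_def)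
  moreover have "P - S \<subseteq> ball w e"
  proof
    fix z assume z: "z \<in> P - S"
    have "\<bar>(z - w) \<bullet> i\<bar> < \<delta>" if "i \<in> Basis" for i
    proof -
      have "\<not> i \<bullet> z \<le> i \<bullet> w - \<delta>" "\<not> i \<bullet> z \<ge> i \<bullet> w + \<delta>" using z that by (auto simp: S_def)
      moreover have "(z - w) \<bullet> i = i \<bullet> z - i \<bullet> w" by (simp add: inner_commute inner_diff_right)
      ultimately show ?thesis by linarith
    qed
    then have "(\<Sum>i\<in>Basis. \<bar>(z - w) \<bullet> i\<bar>) < (\<Sum>i\<in>(Basis::'a set). \<delta>)"
      by (intro sum_strict_mono) auto
    also have "\<dots> = e" by (simp add: \<delta>_def)
    finally have "norm (z - w) < e" using norm_le_l1[of "z - w"] by linarith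
    then show "z \<in> ball w e" by (simp add: dist_norm norm_minus_commute)
  qed
  ultimately show ?thesis using V w by blast
qed

lemma isCont_Max_image:
  fixes f :: "'i \<Rightarrow> 'a::t2_space \<Rightarrow> real"
  assumes "finite I" and "I \<noteq> {}" and "\<And>i. i \<in> I \<Longrightarrow> isCont (f i) x"
  shows "isCont (\<lambda>y. Max ((\<lambda>i. f i y) ` I)) x"
  using assms
proof (induction I rule: finite_ne_induct)
  case (insert i I)
  then have "(\<lambda>y. Max ((\<lambda>i. f i y) ` insert i I)) = (\<lambda>y. max (f i y) (Max ((\<lambda>i. f i y) ` I)))"
    by simp
  then show ?case using insert by (simp add: continuous_max)
qed simp

text \<open>For C \<ge> 0 the right-hand side is again a maximum of affine functions, for C < 0 a
  minimum, so the set is a finite union resp. intersection of halfspaces.\<close>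
lemma finite_union_of_polyhedron_le_mult_Max:
  fixes u :: "'a::euclidean_space"
  assumes "finite A" and "A \<noteq> {}"
  shows "(finite union_of polyhedron) {y. u \<bullet> y + r \<le> C * Max ((\<lambda>(p, q). p \<bullet> y + q) ` A)}"
proof -
  let ?H = "\<lambda>(p, q). {y. u \<bullet> y + r \<le> C * (p \<bullet> y + q)}"
  have H: "(finite union_of polyhedron) (?H pq)" for pq
  proof -
    obtain p q where "pq = (p, q)" by fastforce
    moreover have "{y. u \<bullet> y + r \<le> C * (p \<bullet> y + q)} = {y. (u - C *\<^sub>R p) \<bullet> y \<le> C * q - r}"
      by (auto simp: inner_diff_left algebra_simps)
    ultimately show ?thesis
      by (simp add: finite_union_of_inc polyhedron_halfspace_le)
  qed
  show ?thesis
  proof (cases "C \<ge> 0")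
    case True
    then have "C * Max ((\<lambda>(p, q). p \<bullet> y + q) ` A) = Max ((\<lambda>(p, q). C * (p \<bullet> y + q)) ` A)" for y
      using assms by (subst mono_Max_commute[where f = "(*) C"])
        (auto intro: monoI mult_left_mono simp: image_image case_prod_beta)
    then have "{y. u \<bullet> y + r \<le> C * Max ((\<lambda>(p, q). p \<bullet> y + q) ` A)} = (\<Union>pq\<in>A. ?H pq)"
      using assms by (auto simp: Max_ge_iff) force
    then show ?thesis using H assms by (simp add: finite_union_of_polyhedron_UN)
  next
    case False
    then have "u \<bullet> y + r \<le> C * m \<longleftrightarrow> m \<le> (u \<bullet> y + r) / C" for y m
      by (simp add: neg_le_divide_eq mult.commute)
    then have "{y. u \<bullet> y + r \<le> C * Max ((\<lambda>(p, q). p \<bullet> y + q) ` A)} = (\<Inter>pq\<in>A. ?H pq)"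
      using assms by (auto simp: Max_le_iff)
    then show ?thesis using H assms by (simp add: finite_union_of_polyhedron_INT)
  qed
qed

text \<open>P in normal form about a point c of its relative interior: every facet inequality is scaled
  to n \<bullet> (y - c) \<le> 1, so that P and its relative interior are the sublevel sets
  gauge \<le> 1 and gauge < 1 of the Minkowski gauge of P about c.\<close>
locale polytope_gauge =
  fixes P :: "'a::euclidean_space set" and c :: 'a and N :: "'a set"
  assumes polytope: "polytope P"
    and finite_N: "finite N"
    and c_in_hull: "c \<in> affine hull P"
    and P_eq: "P = {y \<in> affine hull P. \<forall>n\<in>N. n \<bullet> (y - c) \<le> 1}"
    and rel_interior_eq: "rel_interior P = {y \<in> affine hull P. \<forall>n\<in>N. n \<bullet> (y - c) < 1}"
begin

definition gauge :: "'a \<Rightarrow> real" where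
  "gauge y = Max ((\<lambda>n. n \<bullet> (y - c)) ` insert 0 N)"

lemma gauge_le_iff: "gauge y \<le> t \<longleftrightarrow> 0 \<le> t \<and> (\<forall>n\<in>N. n \<bullet> (y - c) \<le> t)"
  by (simp add: gauge_def finite_N)

lemma gauge_less_iff: "gauge y < t \<longleftrightarrow> 0 < t \<and> (\<forall>n\<in>N. n \<bullet> (y - c) < t)"
  by (simp add: gauge_def finite_N)

lemma gauge_radial:
  assumes "0 \<le> t"
  shows "gauge (c + t *\<^sub>R (y - c)) = t * gauge y"
proof -
  have "mono ((*) t)" using assms by (auto intro: monoI mult_left_mono)
  then have "t * gauge y = Max ((*) t ` (\<lambda>n. n \<bullet> (y - c)) ` insert 0 N)"
    unfolding gauge_def by (rule mono_Max_commute) (auto simp: finite_N)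
  then show ?thesis by (simp add: gauge_def image_image)
qed

lemma isCont_gauge: "isCont gauge x"
  unfolding gauge_def[abs_def]
  by (intro isCont_Max_image) (auto simp: finite_N intro: continuous_intros)

lemma affine_hull_radial: "y \<in> affine hull P \<Longrightarrow> c + t *\<^sub>R (y - c) \<in> affine hull P"
  using mem_affine[OF affine_affine_hull c_in_hull, of y "1 - t" t]
  by (simp add: algebra_simps)

lemma mem_P_iff: "y \<in> P \<longleftrightarrow> y \<in> affine hull P \<and> gauge y \<le> 1"
  by (subst (1) P_eq) (simp add: gauge_le_iff)

lemma mem_rel_interior_iff: "y \<in> rel_interior P \<longleftrightarrow> y \<in> affine hull P \<and> gauge y < 1"
  by (simp add: rel_interior_eq gauge_less_iff)

text \<open>rho stretches {gauge \<le> 1/2} radially by the factor 2 onto P and folds the collar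
  {1/2 < gauge < 1} back onto {1/2 < gauge \<le> 1}; rho_inv_inner and rho_inv_outer below are the
  inverses of these two branches.\<close>
definition rho_divisor :: "'a \<Rightarrow> real" where
  "rho_divisor y = max (1/2) (3 * gauge y - 1)"

definition rho :: "'a \<Rightarrow> 'a" where
  "rho y = c + (1 / rho_divisor y) *\<^sub>R (y - c)"

lemma rho_divisor_ge: "1/2 \<le> rho_divisor y"
  by (simp add: rho_divisor_def)

lemma rho_divisor_pos: "0 < rho_divisor y"
  using rho_divisor_ge[of y] by linarith

lemma gauge_rho: "gauge (rho y) = gauge y / rho_divisor y"
  using gauge_radial[of "1 / rho_divisor y" y] rho_divisor_pos[of y] by (simp add: rho_def)

lemma rho_divisor_Max:
  "rho_divisor y =
     Max ((\<lambda>(p, q). p \<bullet> y + q) ` insert (0, 1/2) ((\<lambda>n. (3 *\<^sub>R n, - 3 * (n \<bullet> c) - 1)) ` insert 0 N))"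
proof -
  have "mono (\<lambda>t::real. 3 * t - 1)" by (auto intro: monoI)
  then have "3 * gauge y - 1 = Max ((\<lambda>n. 3 * (n \<bullet> (y - c)) - 1) ` insert 0 N)"
    unfolding gauge_def by (subst mono_Max_commute) (auto simp: finite_N image_image)
  then show ?thesis
    by (simp add: rho_divisor_def image_image finite_N inner_diff_right algebra_simps)
qed

lemma rho_in_P:
  assumes "y \<in> affine hull P"
  shows "rho y \<in> P"
proof -
  have "gauge y \<le> rho_divisor y" by (simp add: rho_divisor_def)
  then have "gauge (rho y) \<le> 1"
    using rho_divisor_pos[of y] by (simp add: gauge_rho pos_divide_le_eq)
  moreover have "rho y \<in> affine hull P"
    unfolding rho_def using assms by (rule affine_hull_radial)
  ultimately show ?thesis by (simp add: mem_P_iff)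
qed

definition rho_inv_inner :: "'a \<Rightarrow> 'a" where
  "rho_inv_inner w = c + (1/2) *\<^sub>R (w - c)"

definition rho_inv_outer :: "'a \<Rightarrow> 'a" where
  "rho_inv_outer w = c + (1 / (3 * gauge w - 1)) *\<^sub>R (w - c)"

lemma rho_inv_inner:
  assumes "w \<in> P"
  shows "rho_inv_inner w \<in> rel_interior P \<and> rho (rho_inv_inner w) = w"
proof -
  have w: "w \<in> affine hull P" "gauge w \<le> 1" using assms mem_P_iff by auto
  have g: "gauge (rho_inv_inner w) = gauge w / 2"
    using gauge_radial[of "1/2" w] by (simp add: rho_inv_inner_def)
  then have "rho_divisor (rho_inv_inner w) = 1/2"
    using w(2) by (simp add: rho_divisor_def)
  then have "rho (rho_inv_inner w) = w"
    by (simp add: rho_def rho_inv_inner_def)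
  moreover have "rho_inv_inner w \<in> rel_interior P"
    using w g by (simp add: mem_rel_interior_iff rho_inv_inner_def affine_hull_radial)
  ultimately show ?thesis by blast
qed

lemma rho_inv_outer:
  assumes "w \<in> P" and "1/2 < gauge w"
  shows "rho_inv_outer w \<in> rel_interior P \<and> rho (rho_inv_outer w) = w"
proof -
  define r where "r = gauge w"
  have w: "w \<in> affine hull P" "r \<le> 1" "1/2 < r" using assms mem_P_iff by (auto simp: r_def)
  have g: "gauge (rho_inv_outer w) = r / (3 * r - 1)"
    using gauge_radial[of "1 / (3 * r - 1)" w] w(3) by (simp add: rho_inv_outer_def r_def)
  have "3 * (r / (3 * r - 1)) - 1 = 1 / (3 * r - 1)" "1/2 \<le> 1 / (3 * r - 1)"
    using w by (simp_all add: field_simps)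
  then have "rho_divisor (rho_inv_outer w) = 1 / (3 * r - 1)"
    by (simp add: rho_divisor_def g)
  then have "rho (rho_inv_outer w) = w"
    using w(3) by (simp add: rho_def rho_inv_outer_def r_def)
  moreover have "r / (3 * r - 1) < 1" using w(3) by (simp add: field_simps)
  then have "rho_inv_outer w \<in> rel_interior P"
    using w g by (simp add: mem_rel_interior_iff rho_inv_outer_def affine_hull_radial)
  ultimately show ?thesis by blast
qed

lemma rho_inv_inner_rho: "gauge y \<le> 1/2 \<Longrightarrow> rho_inv_inner (rho y) = y"
  by (simp add: rho_inv_inner_def rho_def rho_divisor_def)

lemma rho_inv_outer_rho:
  assumes "1/2 < gauge y"
  shows "rho_inv_outer (rho y) = y"
proof -
  define s where "s = gauge y"
  have D: "rho_divisor y = 3 * s - 1" using assms by (simp add: rho_divisor_def s_def)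
  have "3 * gauge (rho y) - 1 = 1 / (3 * s - 1)"
    using assms by (simp add: gauge_rho D s_def[symmetric] field_simps)
  then show ?thesis
    using assms by (simp add: rho_inv_outer_def rho_def D s_def[symmetric])
qed

lemma isCont_rho_inv_outer:
  assumes "1/3 < gauge w"
  shows "isCont rho_inv_outer w"
proof -
  have "3 * gauge w - 1 \<noteq> 0" using assms by simp
  then show ?thesis
    unfolding rho_inv_outer_def[abs_def] by (intro continuous_intros isCont_gauge) auto
qed

lemma rho_image: "rho ` rel_interior P = P"
proof
  show "rho ` rel_interior P \<subseteq> P"
    using rho_in_P mem_rel_interior_iff by auto
  show "P \<subseteq> rho ` rel_interior P"
    using rho_inv_inner by (metis image_eqI subsetI)
qed

lemma rho_local_inverse:
  assumes "y \<in> rel_interior P"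
  obtains \<sigma> e where "isCont \<sigma> (rho y)" and "\<sigma> (rho y) = y" and "0 < e"
    and "\<And>w. w \<in> P \<Longrightarrow> dist w (rho y) < e \<Longrightarrow> \<sigma> w \<in> rel_interior P \<and> rho (\<sigma> w) = w"
proof (cases "gauge y \<le> 1/2")
  case True
  have "isCont rho_inv_inner (rho y)"
    unfolding rho_inv_inner_def[abs_def] by (intro continuous_intros)
  with True show ?thesis
    using that[of rho_inv_inner 1] rho_inv_inner rho_inv_inner_rho by simp
next
  case False
  have "gauge y < 1" using assms mem_rel_interior_iff by blast
  with False have g: "1/2 < gauge (rho y)"
    by (simp add: gauge_rho rho_divisor_def field_simps)
  then obtain e where e: "0 < e"
      "\<And>w. dist w (rho y) < e \<Longrightarrow> dist (gauge w) (gauge (rho y)) < gauge (rho y) - 1/2"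
    using isCont_gauge[of "rho y"] unfolding continuous_at_eps_delta by (metis diff_gt_0_iff_gt)
  have "1/2 < gauge w" if "dist w (rho y) < e" for w
    using e(2)[OF that] by (simp add: dist_real_def)
  moreover have "isCont rho_inv_outer (rho y)"
    using g by (intro isCont_rho_inv_outer) simp
  ultimately show ?thesis
    using that[of rho_inv_outer e] e(1) False rho_inv_outer rho_inv_outer_rho by simp
qed

lemma finite_union_of_polyhedron_rho_preimage_halfspace:
  "(finite union_of polyhedron) {y. u \<bullet> rho y \<le> r}"
proof -
  have eq: "u \<bullet> rho y \<le> r \<longleftrightarrow> u \<bullet> y + - (u \<bullet> c) \<le> (r - u \<bullet> c) * rho_divisor y" for y
  proof -
    have "u \<bullet> rho y = u \<bullet> c + (u \<bullet> y - u \<bullet> c) / rho_divisor y"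
      by (simp add: rho_def inner_add_right inner_diff_right)
    then have "u \<bullet> rho y \<le> r \<longleftrightarrow> (u \<bullet> y - u \<bullet> c) / rho_divisor y \<le> r - u \<bullet> c" by linarith
    also have "\<dots> \<longleftrightarrow> u \<bullet> y - u \<bullet> c \<le> (r - u \<bullet> c) * rho_divisor y"
      using rho_divisor_pos[of y] by (rule pos_divide_le_eq)
    finally show ?thesis by simp
  qed
  have "(finite union_of polyhedron) {y. u \<bullet> y + - (u \<bullet> c) \<le> (r - u \<bullet> c) * rho_divisor y}"
    unfolding rho_divisor_Max by (rule finite_union_of_polyhedron_le_mult_Max) (simp_all add: finite_N)
  then show ?thesis by (simp only: eq)
qed

lemma finite_union_of_polyhedron_rho_preimage:
  assumes "pl_polyhedron R"
  shows "(finite union_of polyhedron) {y. rho y \<in> R}"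
proof -
  have "(finite union_of polyhedron) {y. rho y \<in> T}" if T: "polytope T" for T
  proof -
    obtain H where H: "finite H" "T = \<Inter>H" "\<forall>h\<in>H. \<exists>u r. u \<noteq> 0 \<and> h = {x. u \<bullet> x \<le> r}"
      using polytope_imp_polyhedron[OF T] unfolding polyhedron_def by metis
    have "(finite union_of polyhedron) {y. rho y \<in> h}" if "h \<in> H" for h
    proof -
      obtain u r where "h = {x. u \<bullet> x \<le> r}" using H(3) \<open>h \<in> H\<close> by metis
      then show ?thesis using finite_union_of_polyhedron_rho_preimage_halfspace by simp
    qed
    then have "(finite union_of polyhedron) (\<Inter>h\<in>H. {y. rho y \<in> h})"
      using H(1) by (rule finite_union_of_polyhedron_INT[rotated])
    moreover have "{y. rho y \<in> T} = (\<Inter>h\<in>H. {y. rho y \<in> h})" unfolding H(2) by blast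
    ultimately show ?thesis by simp
  qed
  moreover obtain \<U> where \<U>: "finite \<U>" "\<U> \<subseteq> Collect polytope" "R = \<Union>\<U>"
    using assms unfolding pl_polyhedron_iff_union_of_polytope union_of_def by blast
  ultimately have "(finite union_of polyhedron) (\<Union>T\<in>\<U>. {y. rho y \<in> T})"
    by (intro finite_union_of_polyhedron_UN) auto
  moreover have "{y. rho y \<in> R} = (\<Union>T\<in>\<U>. {y. rho y \<in> T})" unfolding \<U>(3) by blast
  ultimately show ?thesis by simp
qed

lemma rel_interior_in_Sub_o: "rel_interior P \<in> Sub_o P"
proof -
  have "y \<in> rel_interior P \<longleftrightarrow> y \<in> P \<and> (\<forall>n\<in>N. n \<bullet> y < 1 + n \<bullet> c)" for y
    by (auto simp: mem_rel_interior_iff mem_P_iff gauge_less_iff gauge_le_iff inner_diff_right)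
  then have "rel_interior P = P - (\<Union>n\<in>N. {y. n \<bullet> y \<ge> 1 + n \<bullet> c})"
    by (auto simp: not_le) (meson not_le)
  moreover have "(finite union_of polyhedron) (\<Union>n\<in>N. {y. n \<bullet> y \<ge> 1 + n \<bullet> c})"
    by (intro finite_union_of_polyhedron_UN finite_N finite_union_of_inc polyhedron_halfspace_ge)
  ultimately show ?thesis using polytope_Diff_in_Sub_o[OF polytope] by simp
qed

lemma rho_preimage_in_Sub_o_rel:
  assumes "V \<in> Sub_o P"
  shows "{y \<in> rel_interior P. rho y \<in> V} \<in> Sub_o_rel P (rel_interior P)"
proof -
  obtain R where R: "V = P - R" "pl_polyhedron R"
    using assms unfolding Sub_o_def by blast
  have "P - {y. rho y \<in> R} \<in> Sub_o P"
    using polytope_Diff_in_Sub_o[OF polytope finite_union_of_polyhedron_rho_preimage[OF R(2)]] .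
  moreover have "{y \<in> rel_interior P. rho y \<in> V} = (P - {y. rho y \<in> R}) \<inter> rel_interior P"
    using rho_image rel_interior_subset unfolding R(1) by blast
  ultimately show ?thesis unfolding Sub_o_rel_def by blast
qed

lemma rho_image_Sub_o_rel_nhds:
  assumes W: "W \<in> Sub_o_rel P (rel_interior P)" and y: "y \<in> W"
  shows "\<exists>V\<in>Sub_o P. rho y \<in> V \<and> V \<subseteq> rho ` W"
proof -
  obtain R where R: "W = (P - R) \<inter> rel_interior P" "pl_polyhedron R"
    using W unfolding Sub_o_rel_def Sub_o_def by blast
  have yO: "y \<in> rel_interior P" using y R(1) by blast
  have "open (- R)" using pl_polyhedron_imp_compact[OF R(2)] by (simp add: compact_imp_closed open_Compl)
  then obtain \<epsilon> where "0 < \<epsilon>" and \<epsilon>: "ball y \<epsilon> \<subseteq> - R"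
    using y R(1) open_contains_ball by blast
  obtain \<sigma> e where \<sigma>: "isCont \<sigma> (rho y)" "\<sigma> (rho y) = y" and "0 < e"
    and inv: "\<And>w. w \<in> P \<Longrightarrow> dist w (rho y) < e \<Longrightarrow> \<sigma> w \<in> rel_interior P \<and> rho (\<sigma> w) = w"
    using rho_local_inverse[OF yO] by blast
  obtain d where "0 < d" and d: "\<And>w. dist w (rho y) < d \<Longrightarrow> dist (\<sigma> w) y < \<epsilon>"
    using \<sigma> \<open>0 < \<epsilon>\<close> unfolding continuous_at_eps_delta by metis
  obtain V where V: "V \<in> Sub_o P" "rho y \<in> V" "V \<subseteq> ball (rho y) (min d e)"
    using Sub_o_nhds[OF polytope, of "rho y" "min d e"] rho_image yO \<open>0 < d\<close> \<open>0 < e\<close> by auto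
  have "V \<subseteq> rho ` W"
  proof
    fix w assume "w \<in> V"
    then have w: "w \<in> P" "dist w (rho y) < d" "dist w (rho y) < e"
      using V Sub_o_subset by (auto simp: dist_commute)
    then have "\<sigma> w \<in> ball y \<epsilon>" using d by (simp add: dist_commute)
    then have "\<sigma> w \<in> W" using inv[OF w(1,3)] \<epsilon> rel_interior_subset R(1) by blast
    then show "w \<in> rho ` W" using inv[OF w(1,3)] by force
  qed
  with V show ?thesis by blast
qed

lemma Logic_of_Sub_o_subset_rel_interior:
  "Logic_of (Sub_o P) P \<subseteq> Logic_of (Sub_o_rel P (rel_interior P)) (rel_interior P)"
  unfolding Sub_o_rel_def
  by (rule Logic_of_subset_restrict[OF rel_interior_in_Sub_o rel_interior_subset])
    (blast intro: Sub_o_Int)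

lemma Logic_of_rel_interior_subset_Sub_o:
  "Logic_of (Sub_o_rel P (rel_interior P)) (rel_interior P) \<subseteq> Logic_of (Sub_o P) P"
proof (rule Logic_of_subset_preimage[where f = rho])
  show "\<forall>W\<in>Sub_o_rel P (rel_interior P). W \<subseteq> rel_interior P"
    unfolding Sub_o_rel_def by blast
  show "\<forall>V\<in>Sub_o P. V \<subseteq> P"
    using Sub_o_subset by blast
  show "\<forall>V\<in>Sub_o P. {y \<in> rel_interior P. rho y \<in> V} \<in> Sub_o_rel P (rel_interior P)"
    using rho_preimage_in_Sub_o_rel by blast
  show "\<forall>W\<in>Sub_o_rel P (rel_interior P). \<forall>y\<in>W. \<exists>V\<in>Sub_o P. rho y \<in> V \<and> V \<subseteq> rho ` W"
    using rho_image_Sub_o_rel_nhds by blast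
  show "rho ` rel_interior P = P"
    by (rule rho_image)
qed

end

lemma polytope_gauge_exists:
  fixes P :: "'a::euclidean_space set"
  assumes "polytope P" and "P \<noteq> {}"
  obtains c N where "polytope_gauge P c N"
proof -
  obtain F where F: "finite F" "P = affine hull P \<inter> \<Inter>F"
      "\<forall>h\<in>F. \<exists>a b. a \<noteq> 0 \<and> h = {x. a \<bullet> x \<le> b}"
      "\<forall>F'. F' \<subset> F \<longrightarrow> P \<subset> affine hull P \<inter> \<Inter>F'"
    using polytope_imp_polyhedron[OF assms(1)] unfolding polyhedron_Int_affine_minimal by blast
  then obtain a b where ab: "\<And>h. h \<in> F \<Longrightarrow> a h \<noteq> 0 \<and> h = {x. a h \<bullet> x \<le> b h}"
    by metis
  have relint: "rel_interior P = {x \<in> P. \<forall>h\<in>F. a h \<bullet> x < b h}"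
    using rel_interior_polyhedron_explicit[OF F(1,2) ab] F(4) by blast
  have "rel_interior P \<noteq> {}"
    using assms polytope_imp_convex rel_interior_eq_empty by blast
  then obtain c where c: "c \<in> rel_interior P" by blast
  define n where "n h = (1 / (b h - a h \<bullet> c)) *\<^sub>R a h" for h
  have pos: "0 < b h - a h \<bullet> c" if "h \<in> F" for h
    using c relint that by auto
  have le: "n h \<bullet> (y - c) \<le> 1 \<longleftrightarrow> a h \<bullet> y \<le> b h"
    and less: "n h \<bullet> (y - c) < 1 \<longleftrightarrow> a h \<bullet> y < b h" if "h \<in> F" for h y
  proof -
    have "n h \<bullet> (y - c) = (a h \<bullet> y - a h \<bullet> c) / (b h - a h \<bullet> c)"
      by (simp add: n_def inner_diff_right diff_divide_distrib)
    then show "n h \<bullet> (y - c) \<le> 1 \<longleftrightarrow> a h \<bullet> y \<le> b h" "n h \<bullet> (y - c) < 1 \<longleftrightarrow> a h \<bullet> y < b h"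
      using pos[OF that] by (simp_all only: divide_le_eq_1_pos divide_less_eq_1_pos) linarith+
  qed
  have P: "P = {y \<in> affine hull P. \<forall>h\<in>F. a h \<bullet> y \<le> b h}"
    using F(2) ab by blast
  have "polytope_gauge P c (n ` F)"
  proof
    show "P = {y \<in> affine hull P. \<forall>m\<in>n ` F. m \<bullet> (y - c) \<le> 1}"
      using P le by auto
    show "rel_interior P = {y \<in> affine hull P. \<forall>m\<in>n ` F. m \<bullet> (y - c) < 1}"
      using relint less P by force
    show "c \<in> affine hull P"
      using c rel_interior_subset by (blast intro: hull_inc)
  qed (use assms(1) F(1) in auto)
  then show ?thesis by (rule that)
qed

theorem lemma5p8:
  fixes P :: "'a::euclidean_space set"
  assumes "pl_polyhedron P" and "convex P"
  shows "Logic_of (Sub_o P) P = Logic_of (Sub_o_rel P (rel_interior P)) (rel_interior P)"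
proof (cases "P = {}")
  case True
  then show ?thesis by (simp add: Sub_o_rel_self)
next
  case False
  then obtain c N where "polytope_gauge P c N"
    using polytope_gauge_exists pl_polyhedron_convex_imp_polytope[OF assms] by blast
  then interpret polytope_gauge P c N .
  show ?thesis
    using Logic_of_Sub_o_subset_rel_interior Logic_of_rel_interior_subset_Sub_o by blast
qed

end
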